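(* Let $G$ be a finite group, let $m$ be the number of irreducible $\mathbb{R}$-characters of $G$, and let $V\in\mathbb{R}^{m\times m}$ be the real character table of $G$ (as defined in the context), with first row the trivial character. Then the polyhedron $$S(G)=\{x\in\mathbb{R}^m \mid xV\ge 0 \text{ (entrywise)},\ x_1=1\}$$ is a simplex of dimension $m-1$. If $G\neq 1$, then the point $e_1=(1,0,\dots,0)$ lies in the interior of $S(G)$ (relative to the affine hyperplane $x_1=1$).
   Context: Let $X\in\mathbb{C}^{n\times n}$ be the complex character table of $G$: rows indexed by the $n$ irreducible complex characters, columns by the $n$ conjugacy classes. Complex conjugation acts on the rows and on the columns of $X$. Summing the rows in each orbit of complex conjugation yields a real matrix $U\in\mathbb{R}^{m\times n}$, $m$ the number of orbits (the rows of $U$ are the irreducible $\mathbb{R}$-characters). Omitting duplicate columns of $U$ (one column per orbit of conjugacy classes under $g\mapsto g^{-1}$; there are $m$ such orbits) gives the square matrix $V\in\mathbb{R}^{m\times m}$, the real character table. The trivial character is taken to be the first row, so the first row of $V$ is the all-ones vector. A vector $x\in\mathbb{Z}^m$ encodes the virtual character $\sum_i x_i\rho_i$, where $\rho_i$ are the irreducible $\mathbb{R}$-characters; the lattice points of $S(G)$ correspond bijectively to the $S$-characters of $G$ (real virtual characters with $[\psi,1_G]=1$ and all values non-negative real). *)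

theory Defs
  imports "HOL-Algebra.Group" "Jordan_Normal_Form.Matrix" "HOL-Analysis.Analysis"
begin

definition cplx_rep :: "('a, 'b) monoid_scheme \<Rightarrow> nat \<Rightarrow> ('a \<Rightarrow> complex Matrix.mat) \<Rightarrow> bool" where
  "cplx_rep G d \<rho> \<longleftrightarrow> 0 < d \<and>
     (\<forall>g\<in>carrier G. \<rho> g \<in> carrier_mat d d) \<and>
     \<rho> \<one>\<^bsub>G\<^esub> = 1\<^sub>m d \<and>
     (\<forall>g\<in>carrier G. \<forall>h\<in>carrier G. \<rho> (g \<otimes>\<^bsub>G\<^esub> h) = \<rho> g * \<rho> h)"

definition invariant_subspace :: "('a, 'b) monoid_scheme \<Rightarrow> nat \<Rightarrow> ('a \<Rightarrow> complex Matrix.mat) \<Rightarrow> complex Matrix.vec set \<Rightarrow> bool" where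
  "invariant_subspace G d \<rho> W \<longleftrightarrow> W \<subseteq> carrier_vec d \<and> 0\<^sub>v d \<in> W \<and>
     (\<forall>v\<in>W. \<forall>w\<in>W. v + w \<in> W) \<and>
     (\<forall>c::complex. \<forall>v\<in>W. c \<cdot>\<^sub>v v \<in> W) \<and>
     (\<forall>g\<in>carrier G. \<forall>v\<in>W. \<rho> g *\<^sub>v v \<in> W)"

definition irreducible_rep :: "('a, 'b) monoid_scheme \<Rightarrow> nat \<Rightarrow> ('a \<Rightarrow> complex Matrix.mat) \<Rightarrow> bool" where
  "irreducible_rep G d \<rho> \<longleftrightarrow> cplx_rep G d \<rho> \<and>
     (\<forall>W. invariant_subspace G d \<rho> W \<longrightarrow> W = {0\<^sub>v d} \<or> W = carrier_vec d)"

definition character_of :: "('a, 'b) monoid_scheme \<Rightarrow> ('a \<Rightarrow> complex Matrix.mat) \<Rightarrow> 'a \<Rightarrow> complex" where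
  "character_of G \<rho> = (\<lambda>g. if g \<in> carrier G then (\<Sum>i<dim_row (\<rho> g). \<rho> g $$ (i, i)) else 0)"

definition irr_chars :: "('a, 'b) monoid_scheme \<Rightarrow> ('a \<Rightarrow> complex) set" where
  "irr_chars G = {chi. \<exists>d \<rho>. irreducible_rep G d \<rho> \<and> chi = character_of G \<rho>}"

section \<open>Irreducible R-characters: sums over orbits of complex conjugation\<close>

definition real_irr_chars :: "('a, 'b) monoid_scheme \<Rightarrow> ('a \<Rightarrow> complex) set" where
  "real_irr_chars G = (\<lambda>chi. if (cnj \<circ> chi) = chi then chi else (\<lambda>g. chi g + cnj (chi g))) ` irr_chars G"

definition trivial_char :: "('a, 'b) monoid_scheme \<Rightarrow> 'a \<Rightarrow> complex" where
  "trivial_char G = (\<lambda>g. if g \<in> carrier G then 1 else 0)"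

definition conj_or_inv_conj :: "('a, 'b) monoid_scheme \<Rightarrow> 'a \<Rightarrow> 'a \<Rightarrow> bool" where
  "conj_or_inv_conj G g h \<longleftrightarrow> (\<exists>x\<in>carrier G.
      h = x \<otimes>\<^bsub>G\<^esub> g \<otimes>\<^bsub>G\<^esub> inv\<^bsub>G\<^esub> x \<or>
      h = x \<otimes>\<^bsub>G\<^esub> inv\<^bsub>G\<^esub> g \<otimes>\<^bsub>G\<^esub> inv\<^bsub>G\<^esub> x)"

text \<open>V is a real character table of G with respect to an enumeration psi of the irreducible
  R-characters (rows, psi i0 trivial) and a system c of representatives of the orbits of
  conjugacy classes under inversion (columns), both indexed by the finite type 'n.\<close>
definition is_real_char_table ::
  "('a, 'b) monoid_scheme \<Rightarrow> ('n::finite \<Rightarrow> 'a \<Rightarrow> complex) \<Rightarrow> ('n \<Rightarrow> 'a) \<Rightarrow> 'n \<Rightarrow> real^'n^'n \<Rightarrow> bool" where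
  "is_real_char_table G \<psi> c i0 V \<longleftrightarrow>
     bij_betw \<psi> UNIV (real_irr_chars G) \<and>
     \<psi> i0 = trivial_char G \<and>
     (\<forall>j. c j \<in> carrier G) \<and>
     (\<forall>g\<in>carrier G. \<exists>!j. conj_or_inv_conj G (c j) g) \<and>
     (\<forall>i j. V $ i $ j = Re (\<psi> i (c j)))"

definition S_polyhedron :: "real^'n^'n \<Rightarrow> 'n::finite \<Rightarrow> (real^'n) set" where
  "S_polyhedron V i0 = {x. (\<forall>j. 0 \<le> (x v* V) $ j) \<and> x $ i0 = 1}"

end

theory Submission
  imports Defs "Jordan_Normal_Form.Schur_Decomposition" "HOL-Algebra.Multiplicative_Group"
begin

text \<open>The irreducible \<open>\<real>\<close>-characters \<open>\<psi>\<^sub>i\<close> are real class functions, constant on the orbits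
  \<open>C\<^sub>j\<close> of conjugacy classes under inversion (a complex character satisfies
  \<open>\<chi>(g\<^sup>-\<^sup>1) = conj \<chi>(g)\<close>, its eigenvalues being roots of unity), and they are pairwise orthogonal
  by Schur's lemma. For \<open>f = \<Sum>\<^sub>i x\<^sub>i \<psi>\<^sub>i\<close>, whose value on \<open>C\<^sub>j\<close> is \<open>(xV)\<^sub>j\<close>, orthogonality gives
  \<open>x\<^sub>k \<langle>\<psi>\<^sub>k,\<psi>\<^sub>k\<rangle> = \<langle>f,\<psi>\<^sub>k\<rangle>\<close>; so \<open>x \<mapsto> xV\<close> is injective, and pairing with the trivial
  character yields \<open>|G| x\<^sub>1 = \<Sum>\<^sub>j |C\<^sub>j| (xV)\<^sub>j\<close>. Hence \<open>x \<mapsto> xV\<close> maps \<open>S(G)\<close> linearly and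
  bijectively onto the simplex \<open>{y \<ge> 0. \<Sum>\<^sub>j |C\<^sub>j| y\<^sub>j = |G|}\<close>, whose vertices are multiples of
  the unit vectors. It maps \<open>e\<^sub>1\<close> to the first row of \<open>V\<close>, the all-ones vector, which lies in
  the open positive orthant; so \<open>e\<^sub>1\<close> is an interior point.\<close>

definition mat_trace :: "'a::comm_ring_1 mat \<Rightarrow> 'a" where
  "mat_trace A = (\<Sum>i<dim_row A. A $$ (i, i))"

lemma index_mult_mat_sum:
  assumes "A \<in> carrier_mat n m" "B \<in> carrier_mat m p" "i < n" "j < p"
  shows "(A * B) $$ (i, j) = (\<Sum>k<m. A $$ (i, k) * B $$ (k, j))"
  using assms by (auto simp: scalar_prod_def lessThan_atLeast0 intro!: sum.cong)

lemma index_mult_mat_vec_sum: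
  assumes "A \<in> carrier_mat n m" "v \<in> carrier_vec m" "i < n"
  shows "(A *\<^sub>v v) $ i = (\<Sum>k<m. A $$ (i, k) * v $ k)"
  using assms by (auto simp: scalar_prod_def lessThan_atLeast0 intro!: sum.cong)

lemma mult_mat_vec_unit_vec:
  fixes A :: "'a::comm_ring_1 mat"
  assumes A: "A \<in> carrier_mat n m" and "l < m" "i < n"
  shows "(A *\<^sub>v unit_vec m l) $ i = A $$ (i, l)"
proof -
  have "(\<Sum>k<m. A $$ (i, k) * unit_vec m l $ k) = (\<Sum>k<m. if k = l then A $$ (i, l) else 0)"
    using assms(2) by (intro sum.cong) auto
  then show ?thesis
    using assms index_mult_mat_vec_sum[OF A unit_vec_carrier] by simp
qed

lemma mat_trace_mult_comm:
  assumes A: "A \<in> carrier_mat n m" and B: "B \<in> carrier_mat m n"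
  shows "mat_trace (A * B) = mat_trace (B * A)"
proof -
  have "mat_trace (A * B) = (\<Sum>i<n. \<Sum>k<m. A $$ (i, k) * B $$ (k, i))"
    unfolding mat_trace_def using A B index_mult_mat_sum[OF A B]
    by (auto intro!: sum.cong simp del: index_mult_mat(1))
  also have "\<dots> = (\<Sum>k<m. \<Sum>i<n. B $$ (k, i) * A $$ (i, k))"
    by (subst sum.swap) (simp add: mult.commute)
  also have "\<dots> = mat_trace (B * A)"
    unfolding mat_trace_def using A B index_mult_mat_sum[OF B A]
    by (auto intro!: sum.cong simp del: index_mult_mat(1))
  finally show ?thesis .
qed

lemma mat_trace_similar:
  assumes A: "A \<in> carrier_mat n n" and wit: "similar_mat_wit A B P Q"
  shows "mat_trace A = mat_trace B"
proof -
  note W = similar_mat_witD2[OF A wit]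
  have "mat_trace A = mat_trace ((P * B) * Q)" using W by simp
  also have "\<dots> = mat_trace (Q * (P * B))"
    by (rule mat_trace_mult_comm[of _ n n]) (use W in auto)
  also have "Q * (P * B) = (Q * P) * B"
    by (rule assoc_mult_mat[symmetric]) (use W in auto)
  finally show ?thesis using W by simp
qed

lemma upper_triangular_mult:
  assumes A: "A \<in> carrier_mat n n" and B: "B \<in> carrier_mat n n"
    and uA: "upper_triangular A" and uB: "upper_triangular B"
  shows "upper_triangular (A * B)" and "\<And>i. i < n \<Longrightarrow> (A * B) $$ (i, i) = A $$ (i, i) * B $$ (i, i)"
proof -
  have vanish: "A $$ (i, k) * B $$ (k, j) = 0" if "i < n" "k < n" "\<not> (i \<le> k \<and> k \<le> j)" for i j k
    using that upper_triangularD[OF uA, of k i] upper_triangularD[OF uB, of j k] A B by auto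
  show "upper_triangular (A * B)"
  proof (rule upper_triangularI)
    fix i j assume "j < i" "i < dim_row (A * B)"
    then show "(A * B) $$ (i, j) = 0"
      using A by (auto simp: index_mult_mat_sum[OF A B] intro!: sum.neutral vanish)
  qed
  fix i assume i: "i < n"
  have "(A * B) $$ (i, i) = (\<Sum>k<n. if k = i then A $$ (i, i) * B $$ (i, i) else 0)"
    unfolding index_mult_mat_sum[OF A B i i] using i vanish by (intro sum.cong) auto
  then show "(A * B) $$ (i, i) = A $$ (i, i) * B $$ (i, i)" using i by simp
qed

lemma upper_triangular_pow:
  assumes B: "B \<in> carrier_mat n n" and uB: "upper_triangular B"
  shows "upper_triangular (B ^\<^sub>m k) \<and> (\<forall>i<n. (B ^\<^sub>m k) $$ (i, i) = B $$ (i, i) ^ k)"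
proof (induction k)
  case (Suc k)
  have "B ^\<^sub>m k \<in> carrier_mat n n" using B by simp
  from upper_triangular_mult[OF this B] Suc uB show ?case
    by (simp add: power_Suc2 del: power_Suc)
qed (use B in auto)

lemma root_of_unity_pow_pred:
  fixes z :: complex
  assumes z: "z ^ k = 1" and k: "k \<ge> 1"
  shows "z ^ (k - 1) = cnj z"
proof -
  have "norm z = 1"
    using z k by (metis norm_one norm_power norm_ge_zero power_eq_1_iff not_one_le_zero)
  then have "z * cnj z = 1" using complex_norm_square[of z] by simp
  moreover have "z * z ^ (k - 1) = 1" using z k by (simp flip: power_Suc)
  ultimately show ?thesis by (metis mult.commute mult.left_neutral mult.assoc)
qed

lemma mat_trace_pow_pred_of_finite_order:
  fixes A :: "complex mat"
  assumes A: "A \<in> carrier_mat n n" and k: "k \<ge> 1" and Ak: "A ^\<^sub>m k = 1\<^sub>m n"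
  shows "mat_trace (A ^\<^sub>m (k - 1)) = cnj (mat_trace A)"
proof -
  obtain es where "char_poly A = (\<Prod>a\<leftarrow>es. [:- a, 1:])"
    using char_poly_factorized[OF A] by auto
  then obtain B P Q where wit: "similar_mat_wit A B P Q" and ut: "upper_triangular B"
    using schur_decomposition[OF A] by (metis prod_cases3)
  note W = similar_mat_witD2[OF A wit]
  have tr_pow: "mat_trace (A ^\<^sub>m j) = mat_trace (B ^\<^sub>m j)" for j
    using A by (intro mat_trace_similar[OF _ similar_mat_wit_pow[OF wit]]) auto
  have "B ^\<^sub>m k = Q * A ^\<^sub>m k * P"
    using similar_mat_wit_pow_id[OF similar_mat_wit_sym[OF wit]] .
  then have "B ^\<^sub>m k = 1\<^sub>m n" using Ak W by simp
  then have roots: "B $$ (i, i) ^ k = 1" if "i < n" for i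
    using upper_triangular_pow[OF W(5) ut, of k] that by auto
  have "mat_trace (A ^\<^sub>m (k - 1)) = (\<Sum>i<n. B $$ (i, i) ^ (k - 1))"
    using tr_pow upper_triangular_pow[OF W(5) ut] W(5) by (simp add: mat_trace_def)
  also have "\<dots> = (\<Sum>i<n. cnj (B $$ (i, i)))"
    using roots root_of_unity_pow_pred k by simp
  also have "\<dots> = cnj (mat_trace A)"
    using tr_pow[of 1] A W(5) by (simp add: mat_trace_def)
  finally show ?thesis .
qed

lemma cplx_rep_carrier: "cplx_rep G d \<rho> \<Longrightarrow> g \<in> carrier G \<Longrightarrow> \<rho> g \<in> carrier_mat d d"
  unfolding cplx_rep_def by auto

lemma cplx_rep_mult:
  "cplx_rep G d \<rho> \<Longrightarrow> g \<in> carrier G \<Longrightarrow> h \<in> carrier G \<Longrightarrow> \<rho> (g \<otimes>\<^bsub>G\<^esub> h) = \<rho> g * \<rho> h"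
  unfolding cplx_rep_def by auto

lemma cplx_rep_one: "cplx_rep G d \<rho> \<Longrightarrow> \<rho> \<one>\<^bsub>G\<^esub> = 1\<^sub>m d"
  unfolding cplx_rep_def by auto

lemma character_of_eq_mat_trace:
  "cplx_rep G d \<rho> \<Longrightarrow> g \<in> carrier G \<Longrightarrow> character_of G \<rho> g = mat_trace (\<rho> g)"
  unfolding character_of_def mat_trace_def by simp

lemma character_of_outside: "g \<notin> carrier G \<Longrightarrow> character_of G \<rho> g = 0"
  unfolding character_of_def by simp

context group
begin

lemma cplx_rep_inv:
  assumes "cplx_rep G d \<rho>" "g \<in> carrier G"
  shows "\<rho> (inv g) * \<rho> g = 1\<^sub>m d"
  using cplx_rep_mult[OF assms(1), of "inv g" g] cplx_rep_one[OF assms(1)] assms(2) by simp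

lemma cplx_rep_pow:
  assumes "cplx_rep G d \<rho>" "g \<in> carrier G"
  shows "\<rho> (g [^] (k::nat)) = \<rho> g ^\<^sub>m k"
  by (induction k)
     (use assms cplx_rep_one[OF assms(1)] cplx_rep_mult[OF assms(1)] cplx_rep_carrier[OF assms] in auto)

lemma character_of_one:
  assumes "cplx_rep G d \<rho>"
  shows "character_of G \<rho> \<one> = of_nat d"
  using character_of_eq_mat_trace[OF assms] cplx_rep_one[OF assms] by (simp add: mat_trace_def)

lemma character_of_conj:
  assumes rep: "cplx_rep G d \<rho>" and g: "g \<in> carrier G" and x: "x \<in> carrier G"
  shows "character_of G \<rho> (x \<otimes> g \<otimes> inv x) = character_of G \<rho> g"
proof -
  have R: "\<rho> x \<in> carrier_mat d d" "\<rho> g \<in> carrier_mat d d" "\<rho> (inv x) \<in> carrier_mat d d"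
    using cplx_rep_carrier[OF rep] g x by auto
  have "character_of G \<rho> (x \<otimes> g \<otimes> inv x) = mat_trace ((\<rho> x * \<rho> g) * \<rho> (inv x))"
    using character_of_eq_mat_trace[OF rep] cplx_rep_mult[OF rep] g x by simp
  also have "\<dots> = mat_trace (\<rho> (inv x) * (\<rho> x * \<rho> g))"
    by (rule mat_trace_mult_comm[of _ d d]) (use R in auto)
  also have "\<rho> (inv x) * (\<rho> x * \<rho> g) = (\<rho> (inv x) * \<rho> x) * \<rho> g" using R by simp
  also have "\<dots> = \<rho> g" using cplx_rep_inv[OF rep x] R by simp
  finally show ?thesis using character_of_eq_mat_trace[OF rep g] by simp
qed

lemma character_of_inv:
  assumes fin: "finite (carrier G)" and rep: "cplx_rep G d \<rho>" and g: "g \<in> carrier G"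
  shows "character_of G \<rho> (inv g) = cnj (character_of G \<rho> g)"
proof -
  define k where "k = order G"
  have k: "k \<ge> 1" using order_gt_0_iff_finite fin k_def by simp
  have gk: "g [^] k = \<one>" using pow_order_eq_1 g k_def by simp
  then have "g [^] (k - 1) \<otimes> g = \<one>" using k by (metis Suc_diff_le diff_Suc_1 nat_pow_Suc)
  then have inv_g: "inv g = g [^] (k - 1)" using inv_equality g by simp
  have "\<rho> g ^\<^sub>m k = 1\<^sub>m d" using cplx_rep_pow[OF rep g, of k] gk cplx_rep_one[OF rep] by simp
  then have "mat_trace (\<rho> g ^\<^sub>m (k - 1)) = cnj (mat_trace (\<rho> g))"
    by (rule mat_trace_pow_pred_of_finite_order[OF cplx_rep_carrier[OF rep g] k])
  then show ?thesis
    using character_of_eq_mat_trace[OF rep] inv_g cplx_rep_pow[OF rep g] g by simp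
qed

end

section \<open>The complex conjugate representation\<close>

interpretation cnj_hom: semiring_hom cnj
  by unfold_locales auto

definition cnj_rep :: "('a \<Rightarrow> complex mat) \<Rightarrow> 'a \<Rightarrow> complex mat" where
  "cnj_rep \<rho> = (\<lambda>g. map_mat cnj (\<rho> g))"

lemma map_vec_cnj_cnj [simp]: "map_vec cnj (map_vec cnj v) = (v :: complex Matrix.vec)"
  by (rule eq_vecI) auto

lemma map_mat_cnj_cnj [simp]: "map_mat cnj (map_mat cnj A) = (A :: complex mat)"
  by (rule eq_matI) auto

lemma map_vec_cnj_carrier_vec [simp]: "map_vec cnj ` carrier_vec d = carrier_vec d"
  by (auto intro: image_eqI[of _ "map_vec cnj", OF map_vec_cnj_cnj[symmetric]])

lemma cplx_rep_cnj_rep: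
  assumes "cplx_rep G d \<rho>" shows "cplx_rep G d (cnj_rep \<rho>)"
  using assms unfolding cplx_rep_def cnj_rep_def
  by (auto simp: cnj_hom.mat_hom_mult[of _ d d _ d] cnj_hom.mat_hom_one)

lemma character_of_cnj_rep:
  assumes "cplx_rep G d \<rho>"
  shows "character_of G (cnj_rep \<rho>) = cnj \<circ> character_of G \<rho>"
proof
  fix g show "character_of G (cnj_rep \<rho>) g = (cnj \<circ> character_of G \<rho>) g"
    using cplx_rep_carrier[OF assms, of g]
    by (auto simp: character_of_def cnj_rep_def cnj_sum intro!: sum.cong)
qed

lemma invariant_subspace_cnj_rep:
  assumes W: "invariant_subspace G d (cnj_rep \<rho>) W"
    and R: "\<And>g. g \<in> carrier G \<Longrightarrow> \<rho> g \<in> carrier_mat d d"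
  shows "invariant_subspace G d \<rho> (map_vec cnj ` W)"
proof -
  have sub: "W \<subseteq> carrier_vec d" using W unfolding invariant_subspace_def by auto
  show ?thesis
    unfolding invariant_subspace_def
  proof (intro conjI ballI allI)
    show "map_vec cnj ` W \<subseteq> carrier_vec d" using sub by auto
    show "0\<^sub>v d \<in> map_vec cnj ` W"
      using W cnj_hom.vec_hom_zero unfolding invariant_subspace_def by (metis image_eqI)
    fix v w assume "v \<in> map_vec cnj ` W" "w \<in> map_vec cnj ` W"
    then obtain v0 w0 where v0: "v0 \<in> W" "v = map_vec cnj v0" and w0: "w0 \<in> W" "w = map_vec cnj w0"
      by auto
    have "v0 \<in> carrier_vec d" "w0 \<in> carrier_vec d" using v0 w0 sub by auto
    then have "map_vec cnj (v0 + w0) = v + w" using v0 w0 by (intro eq_vecI) auto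
    moreover have "v0 + w0 \<in> W" using W v0 w0 unfolding invariant_subspace_def by auto
    ultimately show "v + w \<in> map_vec cnj ` W" by (metis image_eqI)
  next
    fix a :: complex and v assume "v \<in> map_vec cnj ` W"
    then obtain v0 where v0: "v0 \<in> W" "v = map_vec cnj v0" by auto
    have "cnj a \<cdot>\<^sub>v v0 \<in> W" using W v0 unfolding invariant_subspace_def by auto
    moreover have "map_vec cnj (cnj a \<cdot>\<^sub>v v0) = a \<cdot>\<^sub>v v"
      using v0 cnj_hom.vec_hom_smult[of "cnj a" v0] by simp
    ultimately show "a \<cdot>\<^sub>v v \<in> map_vec cnj ` W" by (metis image_eqI)
  next
    fix g v assume g: "g \<in> carrier G" and "v \<in> map_vec cnj ` W"
    then obtain v0 where v0: "v0 \<in> W" "v = map_vec cnj v0" by auto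
    have "cnj_rep \<rho> g *\<^sub>v v0 \<in> W" using W v0 g unfolding invariant_subspace_def by auto
    moreover have "map_vec cnj (cnj_rep \<rho> g *\<^sub>v v0) = \<rho> g *\<^sub>v v"
      using cnj_hom.mult_mat_vec_hom[of "cnj_rep \<rho> g" d d v0] v0 sub R[OF g]
      by (simp add: cnj_rep_def subset_iff)
    ultimately show "\<rho> g *\<^sub>v v \<in> map_vec cnj ` W" by (metis image_eqI)
  qed
qed

lemma irreducible_cnj_rep:
  assumes irr: "irreducible_rep G d \<rho>"
  shows "irreducible_rep G d (cnj_rep \<rho>)"
proof -
  have rep: "cplx_rep G d \<rho>" using irr by (simp add: irreducible_rep_def)
  have "W = {0\<^sub>v d} \<or> W = carrier_vec d" if W: "invariant_subspace G d (cnj_rep \<rho>) W" for W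
  proof -
    have W_eq: "W = map_vec cnj ` (map_vec cnj ` W)" by (simp add: image_image)
    consider (zero) "map_vec cnj ` W = {0\<^sub>v d}" | (full) "map_vec cnj ` W = carrier_vec d"
      using irr invariant_subspace_cnj_rep[OF W cplx_rep_carrier[OF rep]]
      unfolding irreducible_rep_def by blast
    then show ?thesis
    proof cases
      case zero
      show ?thesis using W_eq[unfolded zero] by (simp add: cnj_hom.vec_hom_zero)
    next
      case full
      show ?thesis using W_eq[unfolded full] by simp
    qed
  qed
  then show ?thesis using cplx_rep_cnj_rep[OF rep] unfolding irreducible_rep_def by blast
qed

section \<open>Schur's lemma and the orthogonality of characters\<close>

lemma intertwiner_kernel_invariant:
  assumes rep: "cplx_rep G d \<rho>" "cplx_rep G e \<sigma>" and T: "T \<in> carrier_mat d e"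
    and inter: "\<And>h. h \<in> carrier G \<Longrightarrow> \<rho> h * T = T * \<sigma> h"
  shows "invariant_subspace G e \<sigma> {v \<in> carrier_vec e. T *\<^sub>v v = 0\<^sub>v d}"
  unfolding invariant_subspace_def
proof (intro conjI ballI allI)
  fix h v assume h: "h \<in> carrier G" and v: "v \<in> {v \<in> carrier_vec e. T *\<^sub>v v = 0\<^sub>v d}"
  have R: "\<rho> h \<in> carrier_mat d d" "\<sigma> h \<in> carrier_mat e e"
    using cplx_rep_carrier[OF rep(1) h] cplx_rep_carrier[OF rep(2) h] .
  have "T *\<^sub>v (\<sigma> h *\<^sub>v v) = (\<rho> h * T) *\<^sub>v v" using T R v inter[OF h] by simp
  also have "\<dots> = 0\<^sub>v d" using T R v by auto
  finally show "\<sigma> h *\<^sub>v v \<in> {v \<in> carrier_vec e. T *\<^sub>v v = 0\<^sub>v d}" using R v by simp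
qed (use T mult_add_distrib_mat_vec[OF T] mult_mat_vec[OF T] in auto)

lemma intertwiner_image_invariant:
  assumes rep: "cplx_rep G d \<rho>" "cplx_rep G e \<sigma>" and T: "T \<in> carrier_mat d e"
    and inter: "\<And>h. h \<in> carrier G \<Longrightarrow> \<rho> h * T = T * \<sigma> h"
  shows "invariant_subspace G d \<rho> ((*\<^sub>v) T ` carrier_vec e)"
  unfolding invariant_subspace_def
proof (intro conjI ballI allI)
  show "0\<^sub>v d \<in> (*\<^sub>v) T ` carrier_vec e"
    using T by (intro image_eqI[of _ _ "0\<^sub>v e"]) auto
  fix v w assume "v \<in> (*\<^sub>v) T ` carrier_vec e" "w \<in> (*\<^sub>v) T ` carrier_vec e"
  then obtain v0 w0 where "v0 \<in> carrier_vec e" "w0 \<in> carrier_vec e" "v = T *\<^sub>v v0" "w = T *\<^sub>v w0"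
    by auto
  then have "v + w = T *\<^sub>v (v0 + w0)" "v0 + w0 \<in> carrier_vec e"
    using mult_add_distrib_mat_vec[OF T] by auto
  then show "v + w \<in> (*\<^sub>v) T ` carrier_vec e" by blast
next
  fix a :: complex and v assume "v \<in> (*\<^sub>v) T ` carrier_vec e"
  then obtain v0 where "v0 \<in> carrier_vec e" "v = T *\<^sub>v v0" by auto
  then have "a \<cdot>\<^sub>v v = T *\<^sub>v (a \<cdot>\<^sub>v v0)" "a \<cdot>\<^sub>v v0 \<in> carrier_vec e"
    using mult_mat_vec[OF T] by auto
  then show "a \<cdot>\<^sub>v v \<in> (*\<^sub>v) T ` carrier_vec e" by blast
next
  fix h v assume h: "h \<in> carrier G" and "v \<in> (*\<^sub>v) T ` carrier_vec e"
  then obtain v0 where v0: "v0 \<in> carrier_vec e" "v = T *\<^sub>v v0" by auto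
  have R: "\<rho> h \<in> carrier_mat d d" "\<sigma> h \<in> carrier_mat e e"
    using cplx_rep_carrier[OF rep(1) h] cplx_rep_carrier[OF rep(2) h] .
  have "\<rho> h *\<^sub>v v = (\<rho> h * T) *\<^sub>v v0" using R T v0 by simp
  also have "\<dots> = T *\<^sub>v (\<sigma> h *\<^sub>v v0)" using R T v0 inter[OF h] by simp
  finally show "\<rho> h *\<^sub>v v \<in> (*\<^sub>v) T ` carrier_vec e" using R v0 by auto
qed (use T in auto)

lemma mat_two_sided_inverse_if_bij:
  fixes T :: "'a::field mat"
  assumes T: "T \<in> carrier_mat d e"
    and inj: "\<And>v. v \<in> carrier_vec e \<Longrightarrow> T *\<^sub>v v = 0\<^sub>v d \<Longrightarrow> v = 0\<^sub>v e"
    and surj: "carrier_vec d \<subseteq> (*\<^sub>v) T ` carrier_vec e"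
  obtains S where "S \<in> carrier_mat e d" "T * S = 1\<^sub>m d" "S * T = 1\<^sub>m e"
proof -
  have "\<exists>v. i < d \<longrightarrow> v \<in> carrier_vec e \<and> T *\<^sub>v v = unit_vec d i" for i
  proof (cases "i < d")
    case True
    then have "unit_vec d i \<in> (*\<^sub>v) T ` carrier_vec e" using surj by auto
    then show ?thesis by auto
  qed simp
  then obtain s where "\<forall>i. i < d \<longrightarrow> s i \<in> carrier_vec e \<and> T *\<^sub>v s i = unit_vec d i"
    using choice[of "\<lambda>i v. i < d \<longrightarrow> v \<in> carrier_vec e \<and> T *\<^sub>v v = unit_vec d i"] by blast
  then have s: "\<And>i. i < d \<Longrightarrow> s i \<in> carrier_vec e \<and> T *\<^sub>v s i = unit_vec d i" by blast
  define S where "S = Matrix.mat e d (\<lambda>(k, i). s i $ k)"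
  have S: "S \<in> carrier_mat e d" unfolding S_def by simp
  have col_S: "col S i = s i" if "i < d" for i
    using s[OF that] that by (auto simp: S_def intro!: eq_vecI)
  have TS: "T * S = 1\<^sub>m d"
  proof (rule eq_matI)
    fix a i assume "a < dim_row (1\<^sub>m d)" "i < dim_col (1\<^sub>m d)"
    then have ai: "a < d" "i < d" by auto
    then have "(T * S) $$ (a, i) = (T *\<^sub>v s i) $ a" using T S col_S by simp
    then show "(T * S) $$ (a, i) = 1\<^sub>m d $$ (a, i)" using s[OF ai(2)] ai by simp
  qed (use T S in auto)
  have ST_vec: "(S * T) *\<^sub>v u = u" if u: "u \<in> carrier_vec e" for u
  proof -
    have Tu: "T *\<^sub>v u \<in> carrier_vec d" using T u by simp
    have "T *\<^sub>v (S *\<^sub>v (T *\<^sub>v u)) = (T * S) *\<^sub>v (T *\<^sub>v u)"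
      using T S Tu by (simp add: assoc_mult_mat_vec)
    also have "\<dots> = T *\<^sub>v u" using TS Tu by simp
    finally have "T *\<^sub>v (S *\<^sub>v (T *\<^sub>v u) - u) = 0\<^sub>v d"
      using T S u by (simp add: mult_minus_distrib_mat_vec)
    then have diff: "S *\<^sub>v (T *\<^sub>v u) - u = 0\<^sub>v e" using T S u by (intro inj) auto
    have "S *\<^sub>v (T *\<^sub>v u) = u"
    proof (rule eq_vecI)
      fix i assume "i < dim_vec u"
      then have "(S *\<^sub>v (T *\<^sub>v u) - u) $ i = 0" using diff u by simp
      then show "(S *\<^sub>v (T *\<^sub>v u)) $ i = u $ i" using \<open>i < dim_vec u\<close> by simp
    qed (use S u in simp)
    then show ?thesis using assoc_mult_mat_vec[OF S T u] by simp
  qed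
  have "S * T = 1\<^sub>m e"
  proof (rule eq_matI)
    fix k l assume "k < dim_row (1\<^sub>m e)" "l < dim_col (1\<^sub>m e)"
    then have kl: "k < e" "l < e" by auto
    have "(S * T) $$ (k, l) = ((S * T) *\<^sub>v unit_vec e l) $ k"
      using mult_mat_vec_unit_vec[of "S * T" e e l k] S T kl by simp
    then show "(S * T) $$ (k, l) = 1\<^sub>m e $$ (k, l)" using ST_vec[of "unit_vec e l"] kl by simp
  qed (use S T in auto)
  with S TS that show ?thesis by blast
qed

lemma character_of_eq_if_conjugate:
  assumes rep: "cplx_rep G d \<rho>" "cplx_rep G e \<sigma>"
    and T: "T \<in> carrier_mat d e" and S: "S \<in> carrier_mat e d"
    and TS: "T * S = 1\<^sub>m d" and ST: "S * T = 1\<^sub>m e"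
    and inter: "\<And>h. h \<in> carrier G \<Longrightarrow> \<rho> h * T = T * \<sigma> h"
  shows "character_of G \<rho> = character_of G \<sigma>"
proof
  fix h show "character_of G \<rho> h = character_of G \<sigma> h"
  proof (cases "h \<in> carrier G")
    case h: True
    have R: "\<rho> h \<in> carrier_mat d d" "\<sigma> h \<in> carrier_mat e e"
      using cplx_rep_carrier[OF rep(1) h] cplx_rep_carrier[OF rep(2) h] .
    have "S * (\<rho> h * T) = S * (T * \<sigma> h)" using inter[OF h] by simp
    also have "\<dots> = (S * T) * \<sigma> h" using R S T by (simp add: assoc_mult_mat)
    also have "\<dots> = \<sigma> h" using ST R by simp
    finally have "mat_trace (\<sigma> h) = mat_trace (S * (\<rho> h * T))" by simp
    also have "\<dots> = mat_trace ((\<rho> h * T) * S)"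
      using R S T by (intro mat_trace_mult_comm[of S e d]) auto
    also have "(\<rho> h * T) * S = \<rho> h" using R S T TS by (simp add: assoc_mult_mat[of _ d d _ e])
    finally show ?thesis using character_of_eq_mat_trace rep h by metis
  qed (simp add: character_of_outside)
qed

theorem intertwiner_eq_0_if_characters_differ:
  assumes irr: "irreducible_rep G d \<rho>" "irreducible_rep G e \<sigma>" and T: "T \<in> carrier_mat d e"
    and inter: "\<And>h. h \<in> carrier G \<Longrightarrow> \<rho> h * T = T * \<sigma> h"
    and ne: "character_of G \<rho> \<noteq> character_of G \<sigma>"
  shows "T = 0\<^sub>m d e"
proof (rule ccontr)
  assume "T \<noteq> 0\<^sub>m d e"
  then obtain i l where il: "i < d" "l < e" "T $$ (i, l) \<noteq> 0"
    using T by (metis carrier_matD eq_matI index_zero_mat(1,2,3))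
  have rep: "cplx_rep G d \<rho>" "cplx_rep G e \<sigma>" using irr by (auto simp: irreducible_rep_def)
  have Tu: "T *\<^sub>v unit_vec e l \<noteq> 0\<^sub>v d"
    using mult_mat_vec_unit_vec[OF T il(2,1)] il by (metis index_zero_vec(1))
  have "{v \<in> carrier_vec e. T *\<^sub>v v = 0\<^sub>v d} = {0\<^sub>v e}"
    using irr(2) intertwiner_kernel_invariant[OF rep T inter] Tu unit_vec_carrier
    unfolding irreducible_rep_def by blast
  then have inj: "\<And>v. v \<in> carrier_vec e \<Longrightarrow> T *\<^sub>v v = 0\<^sub>v d \<Longrightarrow> v = 0\<^sub>v e" by blast
  have "(*\<^sub>v) T ` carrier_vec e = carrier_vec d"
    using irr(1) intertwiner_image_invariant[OF rep T inter] Tu unit_vec_carrier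
    unfolding irreducible_rep_def by blast
  then obtain S where "S \<in> carrier_mat e d" "T * S = 1\<^sub>m d" "S * T = 1\<^sub>m e"
    using mat_two_sided_inverse_if_bij[OF T inj] by blast
  then show False using character_of_eq_if_conjugate[OF rep T _ _ _ inter] ne by blast
qed

text \<open>The matrix \<open>\<Sum>\<^sub>g \<rho>(g) E\<^sub>j\<^sub>k \<sigma>(g\<^sup>-\<^sup>1)\<close>, where \<open>E\<^sub>j\<^sub>k\<close> is the \<open>(j,k)\<close> matrix unit.\<close>

definition averaged_intertwiner ::
  "('a, 'b) monoid_scheme \<Rightarrow> ('a \<Rightarrow> complex mat) \<Rightarrow> ('a \<Rightarrow> complex mat) \<Rightarrow> nat \<Rightarrow> nat \<Rightarrow> nat \<Rightarrow> nat \<Rightarrow> complex mat"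
where
  "averaged_intertwiner G \<rho> \<sigma> d e j k =
     Matrix.mat d e (\<lambda>(i, l). \<Sum>g\<in>carrier G. \<rho> g $$ (i, j) * \<sigma> (inv\<^bsub>G\<^esub> g) $$ (k, l))"

context group
begin

lemma sum_carrier_translate:
  assumes "h \<in> carrier G"
  shows "(\<Sum>g\<in>carrier G. F (h \<otimes> g)) = (\<Sum>g\<in>carrier G. F g)"
  by (rule sum.reindex_bij_witness[where i="\<lambda>g. inv h \<otimes> g" and j="\<lambda>g. h \<otimes> g"])
     (use assms in \<open>auto simp: m_assoc[symmetric]\<close>)

lemma averaged_intertwiner_intertwines:
  assumes rep: "cplx_rep G d \<rho>" "cplx_rep G e \<sigma>" and jk: "j < d" "k < e" and h: "h \<in> carrier G"
  defines "T \<equiv> averaged_intertwiner G \<rho> \<sigma> d e j k"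
  shows "\<rho> h * T = T * \<sigma> h"
proof -
  have T: "T \<in> carrier_mat d e" unfolding T_def averaged_intertwiner_def by simp
  note R1 = cplx_rep_carrier[OF rep(1)] and R2 = cplx_rep_carrier[OF rep(2)]
  have "(\<rho> h * T) $$ (a, b) = (T * \<sigma> h) $$ (a, b)" if a: "a < d" and b: "b < e" for a b
  proof -
    define F where "F x = \<rho> x $$ (a, j) * \<sigma> (inv x \<otimes> h) $$ (k, b)" for x
    have "(\<rho> h * T) $$ (a, b) = (\<Sum>g\<in>carrier G. (\<Sum>m<d. \<rho> h $$ (a, m) * \<rho> g $$ (m, j)) * \<sigma> (inv g) $$ (k, b))"
      using a b T R1[OF h]
      by (simp add: index_mult_mat_sum[of _ d d _ e] T_def averaged_intertwiner_def sum_distrib_left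
          sum_distrib_right mult.assoc sum.swap[of _ "{..<d}"] del: index_mult_mat(1))
    also have "\<dots> = (\<Sum>g\<in>carrier G. F (h \<otimes> g))"
    proof (rule sum.cong)
      fix g assume g: "g \<in> carrier G"
      have "(\<Sum>m<d. \<rho> h $$ (a, m) * \<rho> g $$ (m, j)) = \<rho> (h \<otimes> g) $$ (a, j)"
        using index_mult_mat_sum[OF R1[OF h] R1[OF g] a jk(1)] cplx_rep_mult[OF rep(1) h g] by simp
      then show "(\<Sum>m<d. \<rho> h $$ (a, m) * \<rho> g $$ (m, j)) * \<sigma> (inv g) $$ (k, b) = F (h \<otimes> g)"
        using g h by (simp add: F_def inv_mult_group m_assoc)
    qed simp
    also have "\<dots> = (\<Sum>g\<in>carrier G. F g)" by (rule sum_carrier_translate[OF h])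
    also have "\<dots> = (\<Sum>g\<in>carrier G. \<rho> g $$ (a, j) * (\<Sum>m<e. \<sigma> (inv g) $$ (k, m) * \<sigma> h $$ (m, b)))"
    proof (rule sum.cong)
      fix g assume g: "g \<in> carrier G"
      have "\<sigma> (inv g \<otimes> h) $$ (k, b) = (\<Sum>m<e. \<sigma> (inv g) $$ (k, m) * \<sigma> h $$ (m, b))"
        using index_mult_mat_sum[OF R2[of "inv g"] R2[OF h] jk(2) b] cplx_rep_mult[OF rep(2), of "inv g" h] g h
        by simp
      then show "F g = \<rho> g $$ (a, j) * (\<Sum>m<e. \<sigma> (inv g) $$ (k, m) * \<sigma> h $$ (m, b))"
        by (simp add: F_def)
    qed simp
    also have "\<dots> = (T * \<sigma> h) $$ (a, b)"
      using a b T R2[OF h]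
      by (simp add: index_mult_mat_sum[of _ d e _ e] T_def averaged_intertwiner_def sum_distrib_left
          sum_distrib_right mult.assoc sum.swap[of _ "{..<e}"] del: index_mult_mat(1))
    finally show ?thesis .
  qed
  then show ?thesis using T R1[OF h] R2[OF h] by (intro eq_matI) auto
qed

lemma matrix_coefficients_orthogonal:
  assumes irr: "irreducible_rep G d \<rho>" "irreducible_rep G e \<sigma>"
    and ne: "character_of G \<rho> \<noteq> character_of G \<sigma>"
    and il: "i < d" "l < e" and jk: "j < d" "k < e"
  shows "(\<Sum>g\<in>carrier G. \<rho> g $$ (i, j) * \<sigma> (inv g) $$ (k, l)) = 0"
proof -
  have rep: "cplx_rep G d \<rho>" "cplx_rep G e \<sigma>" using irr by (auto simp: irreducible_rep_def)
  have "averaged_intertwiner G \<rho> \<sigma> d e j k = 0\<^sub>m d e"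
  proof (rule intertwiner_eq_0_if_characters_differ[OF irr _ _ ne])
    show "averaged_intertwiner G \<rho> \<sigma> d e j k \<in> carrier_mat d e"
      by (simp add: averaged_intertwiner_def)
  qed (rule averaged_intertwiner_intertwines[OF rep jk])
  then have "averaged_intertwiner G \<rho> \<sigma> d e j k $$ (i, l) = 0" using il by simp
  then show ?thesis using il by (simp add: averaged_intertwiner_def)
qed

theorem characters_orthogonal:
  assumes irr: "irreducible_rep G d \<rho>" "irreducible_rep G e \<sigma>"
    and ne: "character_of G \<rho> \<noteq> character_of G \<sigma>"
  shows "(\<Sum>g\<in>carrier G. character_of G \<rho> g * character_of G \<sigma> (inv g)) = 0"
proof -
  have rep: "cplx_rep G d \<rho>" "cplx_rep G e \<sigma>" using irr by (auto simp: irreducible_rep_def)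
  have "(\<Sum>g\<in>carrier G. character_of G \<rho> g * character_of G \<sigma> (inv g))
      = (\<Sum>g\<in>carrier G. (\<Sum>i<d. \<rho> g $$ (i, i)) * (\<Sum>k<e. \<sigma> (inv g) $$ (k, k)))"
  proof (rule sum.cong)
    fix g assume g: "g \<in> carrier G"
    then have "\<rho> g \<in> carrier_mat d d" "\<sigma> (inv g) \<in> carrier_mat e e"
      using cplx_rep_carrier[OF rep(1)] cplx_rep_carrier[OF rep(2)] by auto
    then show "character_of G \<rho> g * character_of G \<sigma> (inv g)
        = (\<Sum>i<d. \<rho> g $$ (i, i)) * (\<Sum>k<e. \<sigma> (inv g) $$ (k, k))"
      using g by (simp add: character_of_eq_mat_trace[OF rep(1)] character_of_eq_mat_trace[OF rep(2)]
          mat_trace_def)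
  qed simp
  also have "\<dots> = (\<Sum>i<d. \<Sum>k<e. \<Sum>g\<in>carrier G. \<rho> g $$ (i, i) * \<sigma> (inv g) $$ (k, k))"
    unfolding sum_product by (subst sum.swap) (subst (2) sum.swap, simp)
  also have "\<dots> = 0"
    using matrix_coefficients_orthogonal[OF irr ne] by simp
  finally show ?thesis .
qed

end

definition cnj_orbit_sum :: "('a \<Rightarrow> complex) \<Rightarrow> 'a \<Rightarrow> complex" where
  "cnj_orbit_sum \<phi> = (if cnj \<circ> \<phi> = \<phi> then \<phi> else (\<lambda>g. \<phi> g + cnj (\<phi> g)))"

definition char_inner :: "('a, 'b) monoid_scheme \<Rightarrow> ('a \<Rightarrow> complex) \<Rightarrow> ('a \<Rightarrow> complex) \<Rightarrow> complex" where
  "char_inner G f h = (\<Sum>g\<in>carrier G. f g * cnj (h g))"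

lemma real_irr_chars_eq_image: "real_irr_chars G = cnj_orbit_sum ` irr_chars G"
  unfolding real_irr_chars_def cnj_orbit_sum_def[abs_def] by simp

lemma cnj_orbit_sum_cnj: "cnj_orbit_sum (cnj \<circ> \<phi>) = cnj_orbit_sum \<phi>"
  by (auto simp: cnj_orbit_sum_def comp_def fun_eq_iff add.commute)

lemma cnj_orbit_sum_eq_sum: "cnj_orbit_sum \<phi> = (\<lambda>g. \<Sum>\<alpha>\<in>{\<phi>, cnj \<circ> \<phi>}. \<alpha> g)"
  by (auto simp: cnj_orbit_sum_def)

lemma cnj_cnj_orbit_sum [simp]: "cnj (cnj_orbit_sum \<phi> g) = cnj_orbit_sum \<phi> g"
  by (auto simp: cnj_orbit_sum_def fun_eq_iff add.commute dest: fun_cong[of _ _ g])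

lemma char_inner_sum_sum:
  assumes "finite A" "finite B"
  shows "char_inner G (\<lambda>g. \<Sum>\<alpha>\<in>A. \<alpha> g) (\<lambda>g. \<Sum>\<beta>\<in>B. \<beta> g) = (\<Sum>\<alpha>\<in>A. \<Sum>\<beta>\<in>B. char_inner G \<alpha> \<beta>)"
  unfolding char_inner_def cnj_sum sum_product
  by (subst sum.swap) (simp add: sum.swap[of _ "carrier G"])

lemma char_inner_self_neq_0:
  assumes "finite (carrier G)" "a \<in> carrier G" "f a \<noteq> 0"
  shows "char_inner G f f \<noteq> 0"
proof -
  have "char_inner G f f = complex_of_real (\<Sum>g\<in>carrier G. (cmod (f g))\<^sup>2)"
    unfolding char_inner_def by (simp flip: complex_norm_square)
  moreover have "0 < (cmod (f a))\<^sup>2" using assms by simp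
  moreover have "(cmod (f a))\<^sup>2 \<le> (\<Sum>g\<in>carrier G. (cmod (f g))\<^sup>2)"
    using assms by (intro member_le_sum) auto
  ultimately show ?thesis by (metis of_real_eq_0_iff not_le order.strict_trans2)
qed

lemma irr_charsE:
  assumes "\<phi> \<in> irr_chars G"
  obtains d \<rho> where "irreducible_rep G d \<rho>" "cplx_rep G d \<rho>" "\<phi> = character_of G \<rho>"
  using assms unfolding irr_chars_def irreducible_rep_def by blast

lemma irr_chars_cnj:
  assumes "\<phi> \<in> irr_chars G" shows "cnj \<circ> \<phi> \<in> irr_chars G"
proof -
  obtain d \<rho> where irr: "irreducible_rep G d \<rho>" and "cplx_rep G d \<rho>" "\<phi> = character_of G \<rho>"
    using assms by (rule irr_charsE)
  then have "cnj \<circ> \<phi> = character_of G (cnj_rep \<rho>)" by (simp add: character_of_cnj_rep)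
  then show ?thesis using irreducible_cnj_rep[OF irr] unfolding irr_chars_def by blast
qed

context group
begin

lemma irr_char_inv:
  "finite (carrier G) \<Longrightarrow> \<phi> \<in> irr_chars G \<Longrightarrow> g \<in> carrier G \<Longrightarrow> \<phi> (inv g) = cnj (\<phi> g)"
  by (elim irr_charsE) (simp add: character_of_inv)

lemma irr_char_conj:
  "\<phi> \<in> irr_chars G \<Longrightarrow> g \<in> carrier G \<Longrightarrow> x \<in> carrier G \<Longrightarrow> \<phi> (x \<otimes> g \<otimes> inv x) = \<phi> g"
  by (elim irr_charsE) (simp add: character_of_conj)

lemma irr_char_one: "\<phi> \<in> irr_chars G \<Longrightarrow> \<exists>d>0. \<phi> \<one> = of_nat d"
  by (elim irr_charsE) (auto simp: character_of_one cplx_rep_def)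

lemma irr_chars_orthogonal:
  assumes fin: "finite (carrier G)" and "\<phi> \<in> irr_chars G" "\<phi>' \<in> irr_chars G" "\<phi> \<noteq> \<phi>'"
  shows "char_inner G \<phi> \<phi>' = 0"
proof -
  obtain d \<rho> e \<sigma> where irr: "irreducible_rep G d \<rho>" "irreducible_rep G e \<sigma>"
    and \<phi>: "\<phi> = character_of G \<rho>" "\<phi>' = character_of G \<sigma>"
    using assms(2,3) by (metis irr_charsE)
  have "char_inner G \<phi> \<phi>' = (\<Sum>g\<in>carrier G. \<phi> g * \<phi>' (inv g))"
    unfolding char_inner_def using irr_char_inv[OF fin assms(3)] by simp
  then show ?thesis using characters_orthogonal[OF irr] assms(4) \<phi> by simp
qed

lemma cnj_orbit_sum_orthogonal:
  assumes fin: "finite (carrier G)" and \<phi>: "\<phi> \<in> irr_chars G" "\<phi>' \<in> irr_chars G"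
    and ne: "cnj_orbit_sum \<phi> \<noteq> cnj_orbit_sum \<phi>'"
  shows "char_inner G (cnj_orbit_sum \<phi>) (cnj_orbit_sum \<phi>') = 0"
proof -
  have "char_inner G \<alpha> \<beta> = 0" if "\<alpha> \<in> {\<phi>, cnj \<circ> \<phi>}" "\<beta> \<in> {\<phi>', cnj \<circ> \<phi>'}" for \<alpha> \<beta>
  proof -
    have "cnj_orbit_sum \<alpha> \<noteq> cnj_orbit_sum \<beta>" using that ne by (auto simp: cnj_orbit_sum_cnj)
    then show ?thesis using that \<phi> irr_chars_cnj by (intro irr_chars_orthogonal[OF fin]) auto
  qed
  then show ?thesis
    unfolding cnj_orbit_sum_eq_sum[of \<phi>] cnj_orbit_sum_eq_sum[of \<phi>'] by (simp add: char_inner_sum_sum)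
qed

lemma cnj_orbit_sum_conj_or_inv_conj:
  assumes fin: "finite (carrier G)" and \<phi>: "\<phi> \<in> irr_chars G" and g: "g \<in> carrier G"
    and "conj_or_inv_conj G g h"
  shows "cnj_orbit_sum \<phi> h = cnj_orbit_sum \<phi> g"
proof -
  obtain x where x: "x \<in> carrier G" and h: "h = x \<otimes> g \<otimes> inv x \<or> h = x \<otimes> inv g \<otimes> inv x"
    using assms(4) unfolding conj_or_inv_conj_def by blast
  have "\<phi> h = \<phi> g \<or> \<phi> h = cnj (\<phi> g)"
    using h irr_char_conj[OF \<phi> _ x] irr_char_inv[OF fin \<phi> g] g by auto
  then show ?thesis by (auto simp: cnj_orbit_sum_def add.commute dest: fun_cong[of _ _ g])
qed

lemma cnj_orbit_sum_one_neq_0: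
  assumes "\<phi> \<in> irr_chars G" shows "cnj_orbit_sum \<phi> \<one> \<noteq> 0"
proof -
  obtain d where "d > 0" "\<phi> \<one> = of_nat d" using irr_char_one[OF assms] by blast
  then show ?thesis by (auto simp: cnj_orbit_sum_def)
qed

end

no_notation Matrix.vec_index (infixl "$" 100)

section \<open>Polyhedra defined by a linear isomorphism\<close>

lemma linear_vector_matrix_mult: "linear (\<lambda>x::real^'m. x v* (V::real^'n^'m))"
  using matrix_vector_mul_linear[of "transpose V"] by (simp add: o_def)

lemma convex_hull_scaled_axes:
  fixes w :: "'n::finite \<Rightarrow> real"
  assumes w: "\<And>j. w j > 0"
  shows "convex hull range (\<lambda>j. axis j (1 / w j)) =
         {y::real^'n. (\<forall>j. 0 \<le> y $ j) \<and> (\<Sum>j\<in>UNIV. w j * y $ j) = 1}" (is "_ = ?\<Delta>")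
proof
  have "range (\<lambda>j. axis j (1 / w j)) \<subseteq> ?\<Delta>"
    using w by (auto simp: axis_def less_imp_le if_distrib[of "(*) _"] less_imp_neq[OF w, THEN not_sym]
        cong: if_cong)
  moreover have "convex ?\<Delta>"
    by (rule convexI) (auto simp: sum.distrib sum_distrib_left algebra_simps
        simp flip: sum_distrib_left intro!: add_nonneg_nonneg)
  ultimately show "convex hull range (\<lambda>j. axis j (1 / w j)) \<subseteq> ?\<Delta>"
    by (rule hull_minimal)
next
  show "?\<Delta> \<subseteq> convex hull range (\<lambda>j. axis j (1 / w j))"
  proof
    fix y assume y: "y \<in> ?\<Delta>"
    have "y = (\<Sum>j\<in>UNIV. (w j * y $ j) *\<^sub>R axis j (1 / w j))"
      by (simp add: vec_eq_iff axis_def if_distrib[of "(*) _"] less_imp_neq[OF w, THEN not_sym]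
          cong: if_cong)
    also have "\<dots> \<in> convex hull range (\<lambda>j. axis j (1 / w j))"
      using y w by (intro convex_sum convex_convex_hull hull_inc) (auto simp: less_imp_le)
    finally show "y \<in> convex hull range (\<lambda>j. axis j (1 / w j))" .
  qed
qed

lemma simplex_linear_preimage:
  fixes L :: "real^'n \<Rightarrow> real^'n" and w :: "'n \<Rightarrow> real"
  assumes L: "linear L" "inj L" and w: "\<And>j. w j > 0"
  shows "(int CARD('n) - 1) simplex {x. (\<forall>j. 0 \<le> L x $ j) \<and> (\<Sum>j\<in>UNIV. w j * L x $ j) = 1}"
proof -
  obtain L' where L': "linear L'" "\<And>x. L' (L x) = x" "\<And>y. L (L' y) = y"
    using linear_injective_isomorphism[OF L] by auto
  have preimage: "{x. L x \<in> A} = L' ` A" for A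
  proof
    show "{x. L x \<in> A} \<subseteq> L' ` A" using L'(2) by (metis image_eqI mem_Collect_eq subsetI)
    show "L' ` A \<subseteq> {x. L x \<in> A}" using L'(3) by auto
  qed
  define D where "D = range (\<lambda>j. axis j (1 / w j))"
  have "{x. (\<forall>j. 0 \<le> L x $ j) \<and> (\<Sum>j\<in>UNIV. w j * L x $ j) = 1} = L' ` (convex hull D)"
    unfolding D_def convex_hull_scaled_axes[OF w] preimage[symmetric] by simp
  also have "\<dots> = convex hull (L' ` D)"
    by (rule convex_hull_linear_image[OF L'(1)])
  finally have S: "{x. (\<forall>j. 0 \<le> L x $ j) \<and> (\<Sum>j\<in>UNIV. w j * L x $ j) = 1} = convex hull (L' ` D)" .
  have "independent D"
    unfolding D_def using w
    by (intro pairwise_orthogonal_independent)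
       (auto simp: pairwise_def orthogonal_def inner_axis_axis less_imp_neq[OF w, THEN not_sym])
  then have "independent (L' ` D)"
    using L' by (intro linear_independent_injective_image) (auto intro: inj_on_inverseI)
  then have "\<not> affine_dependent (L' ` D)"
    using affine_dependent_imp_dependent by blast
  moreover have "inj (\<lambda>j. axis j (1 / w j))"
    by (auto intro!: injI simp: axis_eq_axis less_imp_neq[OF w, THEN not_sym])
  then have "card (L' ` D) = CARD('n)"
    unfolding D_def using L' by (subst card_image) (auto intro: inj_on_inverseI simp: card_image)
  ultimately show ?thesis
    unfolding S by (intro simplex_convex_hull) simp
qed

lemma nonneg_near_positive:
  fixes L :: "real^'m \<Rightarrow> real^'n"
  assumes "linear L" and "\<forall>j. 0 < L x0 $ j"
  shows "\<exists>\<epsilon>>0. \<forall>y. dist y x0 < \<epsilon> \<longrightarrow> (\<forall>j. 0 \<le> L y $ j)"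
proof -
  have "continuous_on UNIV (\<lambda>y. L y $ j)" for j
    using assms(1) by (intro continuous_intros linear_continuous_on) (simp add: linear_conv_bounded_linear)
  then have "open (\<Inter>j. {y. 0 < L y $ j})"
    by (auto intro!: open_Collect_less continuous_on_const)
  moreover have "x0 \<in> (\<Inter>j. {y. 0 < L y $ j})" using assms(2) by auto
  ultimately obtain \<epsilon> where "\<epsilon> > 0" "ball x0 \<epsilon> \<subseteq> (\<Inter>j. {y. 0 < L y $ j})"
    by (meson openE)
  then show ?thesis
    by (intro exI[of _ \<epsilon>]) (auto simp: subset_iff dist_commute less_imp_le)
qed

section \<open>The real character table\<close>

locale real_char_table = group G for G :: "('a, 'b) monoid_scheme" (structure) +
  fixes \<psi> :: "'n::finite \<Rightarrow> 'a \<Rightarrow> complex" and c :: "'n \<Rightarrow> 'a" and i0 :: 'n and V :: "real^'n^'n"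
  assumes finite_carrier: "finite (carrier G)"
    and char_table: "is_real_char_table G \<psi> c i0 V"
begin

lemma class_rep_carrier: "c j \<in> carrier G"
  using char_table unfolding is_real_char_table_def by blast

lemma table_entry: "V $ i $ j = Re (\<psi> i (c j))"
  using char_table unfolding is_real_char_table_def by blast

lemma psi_trivial: "\<psi> i0 = trivial_char G"
  using char_table unfolding is_real_char_table_def by blast

lemma psi_inj: "inj \<psi>"
  using char_table unfolding is_real_char_table_def bij_betw_def by blast

lemma psi_cnj_orbit_sum:
  obtains \<phi> where "\<phi> \<in> irr_chars G" "\<psi> i = cnj_orbit_sum \<phi>"
  using char_table unfolding is_real_char_table_def bij_betw_def real_irr_chars_eq_image by blast

definition class_index :: "'a \<Rightarrow> 'n" where
  "class_index g = (THE j. conj_or_inv_conj G (c j) g)"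

lemma class_index: "g \<in> carrier G \<Longrightarrow> conj_or_inv_conj G (c (class_index g)) g"
  using char_table unfolding is_real_char_table_def class_index_def by (metis theI')

lemma class_index_class_rep [simp]: "class_index (c j) = j"
proof -
  have "c j = \<one> \<otimes> c j \<otimes> inv \<one>" using class_rep_carrier by simp
  then have "conj_or_inv_conj G (c j) (c j)" unfolding conj_or_inv_conj_def by blast
  moreover have "\<exists>!j'. conj_or_inv_conj G (c j') (c j)"
    using char_table class_rep_carrier unfolding is_real_char_table_def by blast
  ultimately show ?thesis unfolding class_index_def by (intro the1_equality)
qed

lemma psi_eq_table_entry:
  assumes g: "g \<in> carrier G"
  shows "\<psi> i g = complex_of_real (V $ i $ class_index g)"
proof -
  obtain \<phi> where \<phi>: "\<phi> \<in> irr_chars G" "\<psi> i = cnj_orbit_sum \<phi>" by (rule psi_cnj_orbit_sum)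
  have "\<psi> i g = \<psi> i (c (class_index g))"
    using cnj_orbit_sum_conj_or_inv_conj[OF finite_carrier \<phi>(1) class_rep_carrier class_index[OF g]] \<phi>(2)
    by simp
  moreover have "cnj (\<psi> i (c (class_index g))) = \<psi> i (c (class_index g))" using \<phi>(2) by simp
  then have "\<psi> i (c (class_index g)) = complex_of_real (Re (\<psi> i (c (class_index g))))"
    by (simp add: Reals_cnj_iff of_real_Re)
  ultimately show ?thesis by (simp add: table_entry)
qed

lemma psi_orthogonal:
  assumes "i \<noteq> k" shows "char_inner G (\<psi> i) (\<psi> k) = 0"
proof -
  obtain \<phi> \<phi>' where \<phi>: "\<phi> \<in> irr_chars G" "\<psi> i = cnj_orbit_sum \<phi>"
    and \<phi>': "\<phi>' \<in> irr_chars G" "\<psi> k = cnj_orbit_sum \<phi>'"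
    by (metis psi_cnj_orbit_sum)
  have "\<psi> i \<noteq> \<psi> k" using psi_inj assms by (meson injD)
  then show ?thesis using cnj_orbit_sum_orthogonal[OF finite_carrier \<phi>(1) \<phi>'(1)] by (simp add: \<phi> \<phi>')
qed

lemma psi_inner_self_neq_0: "char_inner G (\<psi> k) (\<psi> k) \<noteq> 0"
proof -
  obtain \<phi> where \<phi>: "\<phi> \<in> irr_chars G" "\<psi> k = cnj_orbit_sum \<phi>" by (rule psi_cnj_orbit_sum)
  then show ?thesis
    using char_inner_self_neq_0[OF finite_carrier one_closed] cnj_orbit_sum_one_neq_0 by simp
qed

lemma trivial_row: "V $ i0 $ j = 1"
  using table_entry psi_trivial class_rep_carrier by (simp add: trivial_char_def)

lemma char_inner_table_combination:
  "char_inner G (\<lambda>g. complex_of_real ((x v* V) $ class_index g)) (\<psi> k)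
     = complex_of_real (x $ k) * char_inner G (\<psi> k) (\<psi> k)"
proof -
  have "char_inner G (\<lambda>g. complex_of_real ((x v* V) $ class_index g)) (\<psi> k)
      = (\<Sum>g\<in>carrier G. \<Sum>i\<in>UNIV. complex_of_real (x $ i) * (\<psi> i g * cnj (\<psi> k g)))"
    unfolding char_inner_def vector_matrix_mult_def
    by (intro sum.cong) (auto simp: psi_eq_table_entry sum_distrib_right mult.assoc)
  also have "\<dots> = (\<Sum>i\<in>UNIV. complex_of_real (x $ i) * char_inner G (\<psi> i) (\<psi> k))"
    unfolding char_inner_def by (subst sum.swap) (simp add: sum_distrib_left)
  also have "\<dots> = complex_of_real (x $ k) * char_inner G (\<psi> k) (\<psi> k)"
    using psi_orthogonal by (subst sum.remove[of _ k]) auto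
  finally show ?thesis .
qed

lemma vector_matrix_mult_inj: "inj (\<lambda>x::real^'n. x v* V)"
proof -
  have "x = 0" if "x v* V = 0" for x :: "real^'n"
  proof -
    have "complex_of_real (x $ k) * char_inner G (\<psi> k) (\<psi> k) = 0" for k
      using char_inner_table_combination[of x k] that by (simp add: char_inner_def)
    then show ?thesis using psi_inner_self_neq_0 by (simp add: vec_eq_iff)
  qed
  then show ?thesis using linear_injective_0[OF linear_vector_matrix_mult] by blast
qed

definition class_weight :: "'n \<Rightarrow> real" where
  "class_weight j = real (card {g \<in> carrier G. class_index g = j}) / real (card (carrier G))"

lemma class_weight_pos: "class_weight j > 0"
proof -
  have "c j \<in> {g \<in> carrier G. class_index g = j}" using class_rep_carrier by simp
  then have "card {g \<in> carrier G. class_index g = j} > 0"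
    using finite_carrier card_gt_0_iff by fastforce
  moreover have "card (carrier G) > 0" using finite_carrier one_closed card_gt_0_iff by blast
  ultimately show ?thesis unfolding class_weight_def by (intro divide_pos_pos) simp_all
qed

lemma trivial_coordinate: "x $ i0 = (\<Sum>j\<in>UNIV. class_weight j * (x v* V) $ j)"
proof -
  let ?f = "\<lambda>g. complex_of_real ((x v* V) $ class_index g)"
  let ?size = "\<lambda>j. card {g \<in> carrier G. class_index g = j}"
  have "char_inner G ?f (\<psi> i0) = (\<Sum>g\<in>carrier G. ?f g)"
    unfolding char_inner_def psi_trivial trivial_char_def by simp
  also have "\<dots> = (\<Sum>j\<in>UNIV. \<Sum>g\<in>{g \<in> carrier G. class_index g = j}. ?f g)"
    by (rule sum.group[OF finite_carrier finite_class.finite_UNIV subset_UNIV, symmetric])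
  also have "\<dots> = (\<Sum>j\<in>UNIV. of_nat (?size j) * complex_of_real ((x v* V) $ j))"
    by (intro sum.cong) auto
  finally have "complex_of_real (x $ i0 * card (carrier G))
      = complex_of_real (\<Sum>j\<in>UNIV. real (?size j) * (x v* V) $ j)"
    using char_inner_table_combination[of x i0]
    by (simp add: char_inner_def psi_trivial trivial_char_def)
  then have "x $ i0 * card (carrier G) = (\<Sum>j\<in>UNIV. real (?size j) * (x v* V) $ j)"
    by (simp only: of_real_eq_iff)
  moreover have "card (carrier G) > 0" using finite_carrier one_closed card_gt_0_iff by blast
  ultimately show ?thesis
    by (simp add: class_weight_def sum_divide_distrib[symmetric] field_simps)
qed

end

theorem proposition2p1:
  fixes G :: "('a, 'b) monoid_scheme"
    and \<psi> :: "'n::finite \<Rightarrow> 'a \<Rightarrow> complex"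
    and c :: "'n \<Rightarrow> 'a" and i0 :: 'n and V :: "real^'n^'n"
  assumes "group G" and "finite (carrier G)"
    and "is_real_char_table G \<psi> c i0 V"
  shows "(int CARD('n) - 1) simplex (S_polyhedron V i0) \<and>
         (carrier G \<noteq> {\<one>\<^bsub>G\<^esub>} \<longrightarrow>
           (\<exists>\<epsilon>>0. \<forall>y::real^'n. y $ i0 = 1 \<and> dist y (axis i0 1) < \<epsilon> \<longrightarrow> y \<in> S_polyhedron V i0))"
proof -
  interpret real_char_table G \<psi> c i0 V
    using assms by (simp add: real_char_table_def real_char_table_axioms_def)
  have S_eq: "S_polyhedron V i0 =
      {x. (\<forall>j. 0 \<le> (x v* V) $ j) \<and> (\<Sum>j\<in>UNIV. class_weight j * (x v* V) $ j) = 1}"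
    unfolding S_polyhedron_def trivial_coordinate[symmetric] ..
  have "(int CARD('n) - 1) simplex (S_polyhedron V i0)"
    unfolding S_eq
    by (rule simplex_linear_preimage[where w = class_weight,
          OF linear_vector_matrix_mult vector_matrix_mult_inj class_weight_pos])
  moreover have "(axis i0 1 v* V) $ j = 1" for j
    using trivial_row by (simp add: vector_matrix_mult_def axis_def if_distrib[of "\<lambda>a. a * _"] cong: if_cong)
  then obtain \<epsilon> where "\<epsilon> > 0" "\<forall>y. dist y (axis i0 1) < \<epsilon> \<longrightarrow> (\<forall>j. 0 \<le> (y v* V) $ j)"
    using nonneg_near_positive[OF linear_vector_matrix_mult, of "axis i0 1" V] by auto
  then have "\<exists>\<epsilon>>0. \<forall>y. y $ i0 = 1 \<and> dist y (axis i0 1) < \<epsilon> \<longrightarrow> y \<in> S_polyhedron V i0"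
    by (auto simp: S_polyhedron_def)
  ultimately show ?thesis by blast
qed

end
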